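(* Let $N\ge1$ and $z\in\mathbb{C}^N$ with $z_j-z_k\notin i\pi\mathbb{Z}$ for $j\neq k$. Define the $N\times N$ matrix $Q$ by $$Q_{jk}=-\delta_{jk}\sum_{n\ne j}\coth(z_j-z_n)+(1-\delta_{jk})\frac{1}{\sinh(z_j-z_k)}.$$ Then $Q$ has spectrum $\{-N+1,-N+3,\ldots,N-3,N-1\}$ (i.e. its characteristic polynomial equals $\prod_{j=1}^N(\lambda-(2j-1-N))$). *)

theory Defs
  imports Complex_Main "Jordan_Normal_Form.Char_Poly"
begin

definition ccoth :: "complex \<Rightarrow> complex" where
  "ccoth w = cosh w / sinh w"

text \<open>The matrix Q of the paper, with indices shifted to 0..N-1.\<close>
definition Qmat :: "nat \<Rightarrow> (nat \<Rightarrow> complex) \<Rightarrow> complex mat" where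
  "Qmat N z = mat N N (\<lambda>(j, k).
     if j = k then - (\<Sum>n\<in>{0..<N} - {j}. ccoth (z j - z n))
     else 1 / sinh (z j - z k))"

end

theory Submission
  imports Defs
begin

text \<open>
  In the variables u_j = exp z_j and x_j = u_j^2 the entries of Q are rational:
  coth (z_j - z_k) = (x_j + x_k) / (x_j - x_k) and 1 / sinh (z_j - z_k) = 2 u_j u_k / (x_j - x_k).
  Using (x_k^m - x_j^m) / (x_k - x_j) = sum_{i<m} x_j^i x_k^(m-1-i), Q maps the vector (u_j x_j^m)_j
  to (2m + 1 - N) times itself plus a combination of the vectors (u_j x_j^l)_j with l < m, whose
  coefficients are power sums of the x_k. So Q W = W T for the scaled Vandermonde matrix
  W = (u_j x_j^m) and an upper triangular T with diagonal 2m + 1 - N. The hypothesis on the z_j says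
  exactly that the x_j are distinct, so W is invertible and Q is similar to T.
\<close>

lemma power_diff_quotient:
  fixes a b :: "'a::field"
  assumes "a \<noteq> b"
  shows "(2 * b ^ Suc m - a ^ m * (a + b)) / (a - b) = - (a ^ m) - 2 * (\<Sum>i<m. a ^ i * b ^ (m - i))"
proof -
  define H where "H = (\<Sum>i<m. b ^ (m - Suc i) * a ^ i)"
  have diff: "a ^ m - b ^ m = (a - b) * H"
    unfolding H_def by (rule power_diff_sumr2)
  have bH: "b * H = (\<Sum>i<m. a ^ i * b ^ (m - i))"
    unfolding H_def sum_distrib_left
    by (rule sum.cong) (auto simp: Suc_diff_Suc[symmetric])
  have "(a - b) * (- (a ^ m) - 2 * (b * H)) = - (a - b) * a ^ m - 2 * b * ((a - b) * H)"
    by (simp add: algebra_simps)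
  also have "\<dots> = 2 * b ^ Suc m - a ^ m * (a + b)"
    unfolding diff[symmetric] by (simp add: algebra_simps)
  finally have "2 * b ^ Suc m - a ^ m * (a + b) = (a - b) * (- (a ^ m) - 2 * (b * H))" ..
  then show ?thesis
    using assms bH by simp
qed

lemma inverse_sinh_diff_eq:
  fixes w v :: complex
  assumes "exp (2 * w) \<noteq> exp (2 * v)"
  shows "1 / sinh (w - v) = 2 * exp w * exp v / (exp (2 * w) - exp (2 * v))"
proof -
  have "exp w * exp w - exp v * exp v \<noteq> 0"
    using assms by (simp add: exp_double power2_eq_square)
  then show ?thesis
    unfolding exp_double power2_eq_square
    by (simp add: sinh_def exp_diff exp_minus scaleR_conv_of_real field_simps)
qed

lemma ccoth_diff_eq:
  fixes w v :: complex
  assumes "exp (2 * w) \<noteq> exp (2 * v)"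
  shows "ccoth (w - v) = (exp (2 * w) + exp (2 * v)) / (exp (2 * w) - exp (2 * v))"
proof -
  have "exp w * exp w - exp v * exp v \<noteq> 0"
    using assms by (simp add: exp_double power2_eq_square)
  then show ?thesis
    unfolding exp_double power2_eq_square
    by (simp add: ccoth_def sinh_def cosh_def exp_diff exp_minus scaleR_conv_of_real
        field_simps)
qed

lemma exp_double_neq:
  fixes w v :: complex
  assumes "w - v \<notin> {\<i> * of_real pi * of_int m | m. m \<in> (UNIV :: int set)}"
  shows "exp (2 * w) \<noteq> exp (2 * v)"
proof
  define t where "t = 2 * (w - v)"
  assume "exp (2 * w) = exp (2 * v)"
  then have one: "exp t = 1"
    unfolding t_def by (simp add: right_diff_distrib exp_diff)
  have "exp (Re t) = 1"
    using arg_cong[OF one, of norm] by simp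
  then have re: "Re t = 0" by simp
  have "cos (Im t) = 1"
    using arg_cong[OF one, of Re] re by (simp add: Re_exp)
  then obtain n :: int where "Im t = n * 2 * pi"
    by (auto simp: cos_one_2pi_int)
  then have "w - v = \<i> * of_real pi * of_int n"
    using re by (intro complex_eqI) (auto simp: t_def algebra_simps)
  with assms show False by blast
qed

lemma vandermonde_kernel_trivial:
  fixes x :: "nat \<Rightarrow> 'a::idom" and v :: "'a vec"
  assumes distinct: "\<And>j k. j < N \<Longrightarrow> k < N \<Longrightarrow> j \<noteq> k \<Longrightarrow> x j \<noteq> x k"
    and v: "v \<in> carrier_vec N"
    and roots: "\<And>j. j < N \<Longrightarrow> (\<Sum>m\<in>{0..<N}. v $ m * x j ^ m) = 0"
  shows "v = 0\<^sub>v N"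
proof (cases "N = 0")
  case True
  then show ?thesis using v by auto
next
  case False
  define p where "p = (\<Sum>m\<in>{0..<N}. monom (v $ m) m)"
  have coeff_p: "coeff p i = (if i < N then v $ i else 0)" for i
    unfolding p_def by (simp add: coeff_sum)
  have "degree p \<le> N - 1"
    by (rule degree_le) (auto simp: coeff_p)
  moreover have "poly p (x j) = 0" if "j < N" for j
    unfolding p_def using roots[OF that] by (simp add: poly_sum poly_monom)
  moreover have "inj_on x {0..<N}"
    unfolding inj_on_def using distinct by fastforce
  then have "card (x ` {0..<N}) = N"
    by (simp add: card_image)
  ultimately have "p = 0"
    using False by (intro poly_eqI_degree[of "x ` {0..<N}"]) auto
  then have "v $ i = 0" if "i < N" for i
    using coeff_p[of i] that by simp
  then show ?thesis
    using v by (intro eq_vecI) auto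
qed

definition scaled_vandermonde :: "nat \<Rightarrow> (nat \<Rightarrow> 'a::comm_ring_1) \<Rightarrow> (nat \<Rightarrow> 'a) \<Rightarrow> 'a mat" where
  "scaled_vandermonde N c x = mat N N (\<lambda>(j, m). c j * x j ^ m)"

lemma dim_scaled_vandermonde [simp]:
  "dim_row (scaled_vandermonde N c x) = N" "dim_col (scaled_vandermonde N c x) = N"
  by (simp_all add: scaled_vandermonde_def)

lemma scaled_vandermonde_carrier: "scaled_vandermonde N c x \<in> carrier_mat N N"
  by (simp add: carrier_matI)

lemma det_scaled_vandermonde_nonzero:
  fixes c x :: "nat \<Rightarrow> 'a::field"
  assumes "\<And>j. j < N \<Longrightarrow> c j \<noteq> 0"
    and "\<And>j k. j < N \<Longrightarrow> k < N \<Longrightarrow> j \<noteq> k \<Longrightarrow> x j \<noteq> x k"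
  shows "det (scaled_vandermonde N c x) \<noteq> 0"
proof
  assume "det (scaled_vandermonde N c x) = 0"
  then obtain v where v: "v \<in> carrier_vec N" "v \<noteq> 0\<^sub>v N" "scaled_vandermonde N c x *\<^sub>v v = 0\<^sub>v N"
    using det_0_iff_vec_prod_zero_field[OF scaled_vandermonde_carrier[of N c x]] by auto
  have "(\<Sum>m\<in>{0..<N}. v $ m * x j ^ m) = 0" if j: "j < N" for j
  proof -
    have "c j * (\<Sum>m\<in>{0..<N}. v $ m * x j ^ m) = (scaled_vandermonde N c x *\<^sub>v v) $ j"
      using v(1) j by (simp add: scaled_vandermonde_def scalar_prod_def sum_distrib_left ac_simps)
    then show ?thesis
      using v(3) j assms(1)[OF j] by simp
  qed
  with v show False
    using vandermonde_kernel_trivial assms(2) by blast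
qed

lemma char_poly_eq_if_intertwined:
  fixes A T W :: "'a::field mat"
  assumes carrier: "A \<in> carrier_mat n n" "T \<in> carrier_mat n n" "W \<in> carrier_mat n n"
    and intertwine: "A * W = W * T"
    and "det W \<noteq> 0"
  shows "char_poly A = char_poly T"
proof -
  obtain V where V: "V \<in> carrier_mat n n" "W * V = 1\<^sub>m n" "V * W = 1\<^sub>m n"
    using det_non_zero_imp_unit[OF carrier(3) assms(5), of "()"]
    by (auto simp: Units_def ring_mat_def)
  have "A = A * (W * V)" using carrier V by simp
  also have "\<dots> = A * W * V"
    using carrier V by (simp add: assoc_mult_mat)
  also have "\<dots> = W * T * V"
    unfolding intertwine ..
  finally have "similar_mat A T"
    using carrier V by (intro similar_matI[of A T W V n]) auto
  then show ?thesis by (rule char_poly_similar)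
qed

definition power_sum :: "(nat \<Rightarrow> 'a::comm_semiring_1) \<Rightarrow> nat \<Rightarrow> nat \<Rightarrow> 'a" where
  "power_sum x N s = (\<Sum>k\<in>{0..<N}. x k ^ s)"

definition Qmat_triangular :: "nat \<Rightarrow> (nat \<Rightarrow> 'a::comm_ring_1) \<Rightarrow> 'a mat" where
  "Qmat_triangular N x = mat N N (\<lambda>(l, m).
     (if l = m then of_int (2 * int m + 1 - int N) else 0)
     + (if l < m then - 2 * power_sum x N (m - l) else 0))"

lemma dim_Qmat_triangular [simp]:
  "dim_row (Qmat_triangular N x) = N" "dim_col (Qmat_triangular N x) = N"
  by (simp_all add: Qmat_triangular_def)

lemma char_poly_Qmat_triangular:
  "char_poly (Qmat_triangular N x) = (\<Prod>j = 1..N. [: - of_int (2 * int j - 1 - int N), 1 :])"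
proof -
  have "char_poly (Qmat_triangular N x) = (\<Prod>a \<leftarrow> diag_mat (Qmat_triangular N x). [:- a, 1:])"
    by (rule char_poly_upper_triangular[of _ N]) (auto simp: Qmat_triangular_def upper_triangular_def)
  also have "diag_mat (Qmat_triangular N x) = map (\<lambda>i. of_int (2 * int i + 1 - int N)) [0..<N]"
    unfolding diag_mat_def Qmat_triangular_def by simp
  also have "(\<Prod>a \<leftarrow> map (\<lambda>i. of_int (2 * int i + 1 - int N)) [0..<N]. [:- a, 1:]) =
      (\<Prod>i = 0..<N. [: - of_int (2 * int i + 1 - int N), 1 :])"
    by (simp add: prod.distinct_set_conv_list[symmetric] comp_def)
  also have "\<dots> = (\<Prod>j = 1..N. [: - of_int (2 * int j - 1 - int N), 1 :])"
    by (rule prod.reindex_bij_witness[of _ "\<lambda>j. j - 1" Suc]) (auto simp: algebra_simps)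
  finally show ?thesis .
qed

definition Qmat_rational :: "nat \<Rightarrow> (nat \<Rightarrow> 'a::field) \<Rightarrow> (nat \<Rightarrow> 'a) \<Rightarrow> 'a mat" where
  "Qmat_rational N u x = mat N N (\<lambda>(j, k).
     if j = k then - (\<Sum>n\<in>{0..<N} - {j}. (x j + x n) / (x j - x n))
     else 2 * u j * u k / (x j - x k))"

lemma Qmat_eq_Qmat_rational:
  assumes "\<And>j k. j < N \<Longrightarrow> k < N \<Longrightarrow> j \<noteq> k \<Longrightarrow>
      z j - z k \<notin> {\<i> * of_real pi * of_int m | m. m \<in> (UNIV :: int set)}"
  shows "Qmat N z = Qmat_rational N (\<lambda>j. exp (z j)) (\<lambda>j. exp (2 * z j))"
proof -
  have "ccoth (z j - z n) = (exp (2 * z j) + exp (2 * z n)) / (exp (2 * z j) - exp (2 * z n))"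
    if "j < N" "n \<in> {0..<N} - {j}" for j n
    using that by (intro ccoth_diff_eq exp_double_neq assms) auto
  moreover have "1 / sinh (z j - z k) = 2 * exp (z j) * exp (z k) / (exp (2 * z j) - exp (2 * z k))"
    if "j < N" "k < N" "j \<noteq> k" for j k
    using that by (intro inverse_sinh_diff_eq exp_double_neq assms)
  ultimately show ?thesis
    unfolding Qmat_def Qmat_rational_def by (intro eq_matI) (auto intro!: sum.cong)
qed

lemma Qmat_rational_pair_term:
  fixes u x :: "nat \<Rightarrow> 'a::field"
  assumes "u k * u k = x k" "x j \<noteq> x k"
  shows "- ((x j + x k) / (x j - x k)) * (u j * x j ^ m) + 2 * u j * u k / (x j - x k) * (u k * x k ^ m)
    = u j * (- (x j ^ m) - 2 * (\<Sum>i<m. x j ^ i * x k ^ (m - i)))"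
proof -
  have "- ((x j + x k) / (x j - x k)) * (u j * x j ^ m) + 2 * u j * u k / (x j - x k) * (u k * x k ^ m)
      = u j * ((2 * (u k * u k) * x k ^ m - x j ^ m * (x j + x k)) / (x j - x k))"
    by (simp add: diff_divide_distrib add_divide_distrib algebra_simps)
  also have "\<dots> = u j * ((2 * x k ^ Suc m - x j ^ m * (x j + x k)) / (x j - x k))"
    by (simp add: assms(1) mult.assoc)
  also have "\<dots> = u j * (- (x j ^ m) - 2 * (\<Sum>i<m. x j ^ i * x k ^ (m - i)))"
    by (simp only: power_diff_quotient[OF assms(2)])
  finally show ?thesis .
qed

lemma Qmat_rational_mult_vandermonde_entry:
  fixes u x :: "nat \<Rightarrow> 'a::field"
  assumes sqrt: "\<And>k. k < N \<Longrightarrow> u k * u k = x k"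
    and distinct: "\<And>k. k < N \<Longrightarrow> k \<noteq> j \<Longrightarrow> x j \<noteq> x k"
    and "j < N" "m < N"
  shows "(Qmat_rational N u x * scaled_vandermonde N u x) $$ (j, m) =
    u j * (- (of_nat (N - 1) * x j ^ m)
           - 2 * (\<Sum>i<m. x j ^ i * (power_sum x N (m - i) - x j ^ (m - i))))"
proof -
  define S where "S = {0..<N} - {j}"
  have S: "k \<in> S \<longleftrightarrow> k < N \<and> k \<noteq> j" for k
    by (auto simp: S_def)
  have "(Qmat_rational N u x * scaled_vandermonde N u x) $$ (j, m) =
      (\<Sum>k\<in>{0..<N}. Qmat_rational N u x $$ (j, k) * (u k * x k ^ m))"
    using assms by (simp add: scalar_prod_def scaled_vandermonde_def Qmat_rational_def)
  also have "\<dots> = Qmat_rational N u x $$ (j, j) * (u j * x j ^ m)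
      + (\<Sum>k\<in>S. Qmat_rational N u x $$ (j, k) * (u k * x k ^ m))"
    unfolding S_def using assms by (intro sum.remove) auto
  also have "\<dots> = (\<Sum>k\<in>S. - ((x j + x k) / (x j - x k)) * (u j * x j ^ m)
      + 2 * u j * u k / (x j - x k) * (u k * x k ^ m))"
  proof -
    have "Qmat_rational N u x $$ (j, j) = - (\<Sum>k\<in>S. (x j + x k) / (x j - x k))"
      unfolding S_def Qmat_rational_def using assms by simp
    moreover have "Qmat_rational N u x $$ (j, k) = 2 * u j * u k / (x j - x k)" if "k \<in> S" for k
      using that assms unfolding Qmat_rational_def by (simp add: S)
    ultimately show ?thesis
      by (simp add: sum_subtractf sum_distrib_right)
  qed
  also have "\<dots> = (\<Sum>k\<in>S. u j * (- (x j ^ m) - 2 * (\<Sum>i<m. x j ^ i * x k ^ (m - i))))"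
    using sqrt distinct by (intro sum.cong refl Qmat_rational_pair_term) (auto simp: S)
  also have "\<dots> = u j * (- (of_nat (card S) * x j ^ m)
      - 2 * (\<Sum>k\<in>S. \<Sum>i<m. x j ^ i * x k ^ (m - i)))"
    by (simp add: sum_subtractf flip: sum_distrib_left)
  also have "\<dots> = u j * (- (of_nat (N - 1) * x j ^ m)
      - 2 * (\<Sum>i<m. x j ^ i * (power_sum x N (m - i) - x j ^ (m - i))))"
  proof -
    have "(\<Sum>k\<in>S. \<Sum>i<m. x j ^ i * x k ^ (m - i)) = (\<Sum>i<m. x j ^ i * (\<Sum>k\<in>S. x k ^ (m - i)))"
      by (simp add: sum_distrib_left) (rule sum.swap)
    moreover have "(\<Sum>k\<in>S. x k ^ (m - i)) = power_sum x N (m - i) - x j ^ (m - i)" for i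
      unfolding S_def power_sum_def using assms by (simp add: sum_diff1)
    moreover have "card S = N - 1"
      unfolding S_def using assms by simp
    ultimately show ?thesis by (simp only:)
  qed
  finally show ?thesis .
qed

lemma vandermonde_mult_Qmat_triangular_entry:
  fixes u x :: "nat \<Rightarrow> 'a::field"
  assumes "j < N" "m < N"
  shows "(scaled_vandermonde N u x * Qmat_triangular N x) $$ (j, m) =
    u j * (of_int (2 * int m + 1 - int N) * x j ^ m - 2 * (\<Sum>i<m. x j ^ i * power_sum x N (m - i)))"
proof -
  have "(scaled_vandermonde N u x * Qmat_triangular N x) $$ (j, m) =
      (\<Sum>l\<in>{0..<N}. (if l = m then u j * x j ^ l * of_int (2 * int m + 1 - int N) else 0))
      + (\<Sum>l\<in>{0..<N}. (if l < m then u j * x j ^ l * (- 2 * power_sum x N (m - l)) else 0))"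
  proof -
    have "(scaled_vandermonde N u x * Qmat_triangular N x) $$ (j, m) =
        (\<Sum>l\<in>{0..<N}. u j * x j ^ l * Qmat_triangular N x $$ (l, m))"
      using assms by (simp add: scalar_prod_def scaled_vandermonde_def)
    also have "\<dots> = (\<Sum>l\<in>{0..<N}. (if l = m then u j * x j ^ l * of_int (2 * int m + 1 - int N) else 0)
        + (if l < m then u j * x j ^ l * (- 2 * power_sum x N (m - l)) else 0))"
      using assms by (intro sum.cong) (auto simp: Qmat_triangular_def)
    finally show ?thesis
      by (simp only: sum.distrib)
  qed
  also have "\<dots> = u j * x j ^ m * of_int (2 * int m + 1 - int N)
      + (\<Sum>l<m. u j * x j ^ l * (- 2 * power_sum x N (m - l)))"
  proof -
    have "{l \<in> {0..<N}. l < m} = {..<m}" using assms by auto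
    then show ?thesis using assms by (simp add: sum.inter_filter[symmetric])
  qed
  also have "\<dots> = u j * (of_int (2 * int m + 1 - int N) * x j ^ m
      - 2 * (\<Sum>i<m. x j ^ i * power_sum x N (m - i)))"
    by (simp add: algebra_simps sum_distrib_left sum_negf)
  finally show ?thesis .
qed

lemma Qmat_rational_mult_vandermonde:
  fixes u x :: "nat \<Rightarrow> 'a::field"
  assumes "\<And>k. k < N \<Longrightarrow> u k * u k = x k"
    and "\<And>j k. j < N \<Longrightarrow> k < N \<Longrightarrow> j \<noteq> k \<Longrightarrow> x j \<noteq> x k"
  shows "Qmat_rational N u x * scaled_vandermonde N u x = scaled_vandermonde N u x * Qmat_triangular N x"
proof (rule eq_matI)
  fix j m assume j: "j < dim_row (scaled_vandermonde N u x * Qmat_triangular N x)"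
    and m: "m < dim_col (scaled_vandermonde N u x * Qmat_triangular N x)"
  then have "j < N" "m < N" by simp_all
  define R where "R = (\<Sum>i<m. x j ^ i * power_sum x N (m - i))"
  have "(Qmat_rational N u x * scaled_vandermonde N u x) $$ (j, m) =
      u j * (- (of_nat (N - 1) * x j ^ m)
             - 2 * (\<Sum>i<m. x j ^ i * (power_sum x N (m - i) - x j ^ (m - i))))"
    using assms \<open>j < N\<close> \<open>m < N\<close> by (intro Qmat_rational_mult_vandermonde_entry) auto
  moreover have "(\<Sum>i<m. x j ^ i * (power_sum x N (m - i) - x j ^ (m - i))) = R - of_nat m * x j ^ m"
    unfolding R_def by (simp add: right_diff_distrib sum_subtractf flip: power_add)
  moreover have "of_nat (N - 1) = (of_nat N - 1 :: 'a)"
    using \<open>j < N\<close> by (simp add: of_nat_diff)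
  ultimately have "(Qmat_rational N u x * scaled_vandermonde N u x) $$ (j, m) =
      u j * (- ((of_nat N - 1) * x j ^ m) - 2 * (R - of_nat m * x j ^ m))"
    by (simp only:)
  also have "\<dots> = u j * (of_int (2 * int m + 1 - int N) * x j ^ m - 2 * R)"
    by (simp add: algebra_simps)
  also have "\<dots> = (scaled_vandermonde N u x * Qmat_triangular N x) $$ (j, m)"
    unfolding R_def using \<open>j < N\<close> \<open>m < N\<close> by (rule vandermonde_mult_Qmat_triangular_entry[symmetric])
  finally show "(Qmat_rational N u x * scaled_vandermonde N u x) $$ (j, m) =
      (scaled_vandermonde N u x * Qmat_triangular N x) $$ (j, m)" .
qed (simp_all add: Qmat_rational_def Qmat_triangular_def)

theorem corollary4p4:
  fixes N :: nat and z :: "nat \<Rightarrow> complex"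
  assumes "N \<ge> 1"
    and "\<And>j k. j < N \<Longrightarrow> k < N \<Longrightarrow> j \<noteq> k \<Longrightarrow>
           z j - z k \<notin> {\<i> * of_real pi * of_int m | m. m \<in> (UNIV :: int set)}"
  shows "char_poly (Qmat N z) =
         (\<Prod>j = 1..N. [: - (of_int (2 * int j - 1 - int N) :: complex), 1 :])"
proof -
  define u where "u = (\<lambda>j. exp (z j))"
  define x where "x = (\<lambda>j. exp (2 * z j))"
  have sqrt: "u k * u k = x k" for k
    unfolding u_def x_def by (simp add: exp_double power2_eq_square)
  have distinct: "x j \<noteq> x k" if "j < N" "k < N" "j \<noteq> k" for j k
    unfolding x_def using that by (intro exp_double_neq assms(2))
  have "Qmat N z = Qmat_rational N u x"
    unfolding u_def x_def using assms(2) by (rule Qmat_eq_Qmat_rational)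
  also have "char_poly \<dots> = char_poly (Qmat_triangular N x)"
  proof (rule char_poly_eq_if_intertwined)
    show "Qmat_rational N u x * scaled_vandermonde N u x = scaled_vandermonde N u x * Qmat_triangular N x"
      using sqrt distinct by (rule Qmat_rational_mult_vandermonde)
    show "det (scaled_vandermonde N u x) \<noteq> 0"
      using distinct by (intro det_scaled_vandermonde_nonzero) (auto simp: u_def)
  qed (auto simp: Qmat_rational_def intro!: carrier_matI)
  finally show ?thesis
    by (simp add: char_poly_Qmat_triangular)
qed

end
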